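(* Let $V$ be an $\mathrm{FI}_G$-module generated in degree $\le m$ such that $H_1^{D^{m+1}}(V)=0$. Then $V$ is related in degree $\le m$. In particular, if $V$ is generated in finite degree and $\mathrm{depth}(V)=\infty$, then $V$ is presented in finite degree.
   Context: Fix a commutative ring $k$ and a group $G$. $\mathrm{FI}_G$ is the category with objects $[n]$ ($n\ge0$) and morphisms $[n]\to[m]$ the pairs $(f,g)$ with $f$ injective and $g:[n]\to G$ a map of sets; composition $(f,g)\circ(f',g')=(f\circ f',h)$, $h(x)=g'(x)\,g(f'(x))$. $G_n=\mathfrak S_n\wr G$. An $\mathrm{FI}_G$-module is a functor $V:\mathrm{FI}_G\to\mathrm{Mod}_k$. $M(n)_m=k[\mathrm{Hom}_{\mathrm{FI}_G}([n],[m])]$; for a $k[G_n]$-module $W$, $M(W)_m=W\otimes_{k[G_n]}k[\mathrm{Hom}_{\mathrm{FI}_G}([n],[m])]$; direct sums of these are relatively projective. Generated in degree $\le m$: surjection $\bigoplus M(n_i)\to V$, $n_i\le m$; related in degree $\le r$: exact $0\to K\to M\to V\to0$ with $M$ relatively projective and $K$ generated in degree $\le r$; presented in finite degree: both finite. $\Sigma$ sends $[n]\mapsto[n+1]$ and $(f,g)\mapsto(f_+,g_+)$ ($f_+$ extends $f$ by $n+1\mapsto m+1$, $g_+$ extends $g$ by $n+1\mapsto1_G$); $SV=V\circ\Sigma$; $\iota:V\to SV$ is $V(f^n,\mathbf1)$ in degree $n$ ($f^n$ standard inclusion, $\mathbf1$ trivial). $DV=\mathrm{coker}(\iota)$, $D^a$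 its $a$-th iterate, $H_i^{D^a}$ left derived functors. $\mathrm{depth}(V)=\inf\{a\ge0:H_1^{D^{a+1}}(V)\ne0\}$ ($\inf\emptyset=\infty$). *)

theory Defs
  imports Main "HOL-Library.Function_Algebras" "HOL-Library.Extended_Nat"
begin

text \<open>[n] is rendered as the 0-indexed set {0..<n}. The group G is a type of class group_add
(group written additively: 0 is the identity, + is the group product). A morphism [n] -> [m]
is a pair (f,g) with f injective {0..<n} -> {0..<m} and g : {0..<n} -> G; outside {0..<n}
both components are normalised to 0 so that morphisms are determined by their restriction.\<close>

type_synonym 'g morph = "(nat \<Rightarrow> nat) \<times> (nat \<Rightarrow> 'g)"

definition hom :: "nat \<Rightarrow> nat \<Rightarrow> ('g::group_add) morph set" where
  "hom n m = {(f, g). inj_on f {..<n} \<and> f ` {..<n} \<subseteq> {..<m}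
                      \<and> (\<forall>x\<ge>n. f x = 0) \<and> (\<forall>x\<ge>n. g x = 0)}"

text \<open>comp n psi phi is psi o phi where phi has domain [n];
  (f,g) o (f',g') = (f o f', h) with h(x) = g'(x) g(f'(x)).\<close>
definition comp :: "nat \<Rightarrow> ('g::group_add) morph \<Rightarrow> 'g morph \<Rightarrow> 'g morph" where
  "comp n psi phi = (\<lambda>x. if x < n then fst psi (fst phi x) else 0,
                     \<lambda>x. if x < n then snd phi x + snd psi (fst phi x) else 0)"

definition idm :: "nat \<Rightarrow> ('g::group_add) morph" where
  "idm n = (\<lambda>x. if x < n then x else 0, \<lambda>x. 0)"

definition incl :: "nat \<Rightarrow> ('g::group_add) morph" where
  "incl n = idm n"

text \<open>The shift functor Sigma on a morphism (f,g) : [n] -> [m]: the new point n is sent to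
the new point m, with label 1_G.\<close>
definition sigma :: "nat \<Rightarrow> nat \<Rightarrow> ('g::group_add) morph \<Rightarrow> 'g morph" where
  "sigma n m phi = ((fst phi)(n := m), (snd phi)(n := 0))"

text \<open>A module is given by an ambient k-module type 'u with scalar multiplication sc, carriers
C n (a submodule of 'u), submodules N n of C n to be divided out (the degree-n piece is
C n / N n), and actions act n m phi.\<close>

type_synonym ('u, 'g) sqm = "(nat \<Rightarrow> 'u set) \<times> (nat \<Rightarrow> 'u set) \<times> (nat \<Rightarrow> nat \<Rightarrow> 'g morph \<Rightarrow> 'u \<Rightarrow> 'u)"

definition setplus :: "'u::ab_group_add set \<Rightarrow> 'u set \<Rightarrow> 'u set" where
  "setplus A B = {a + b | a b. a \<in> A \<and> b \<in> B}"

definition is_sqm :: "('k::comm_ring_1 \<Rightarrow> 'u::ab_group_add \<Rightarrow> 'u) \<Rightarrow> ('u, 'g::group_add) sqm \<Rightarrow> bool" where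
  "is_sqm sc X = (case X of (C, N, act) \<Rightarrow>
     module sc
   \<and> (\<forall>n. module.subspace sc (C n) \<and> module.subspace sc (N n) \<and> N n \<subseteq> C n)
   \<and> (\<forall>n m phi. phi \<in> hom n m \<longrightarrow>
         (\<forall>x\<in>C n. act n m phi x \<in> C m) \<and> (\<forall>x\<in>N n. act n m phi x \<in> N m)
       \<and> (\<forall>x\<in>C n. \<forall>y\<in>C n. act n m phi (x + y) = act n m phi x + act n m phi y)
       \<and> (\<forall>c. \<forall>x\<in>C n. act n m phi (sc c x) = sc c (act n m phi x)))
   \<and> (\<forall>n. \<forall>x\<in>C n. act n n (idm n) x - x \<in> N n)
   \<and> (\<forall>n m l phi psi. phi \<in> hom n m \<longrightarrow> psi \<in> hom m l \<longrightarrow>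
         (\<forall>x\<in>C n. act n l (comp n psi phi) x - act m l psi (act n m phi x) \<in> N l)))"

definition fig_module :: "('k::comm_ring_1 \<Rightarrow> 'v::ab_group_add \<Rightarrow> 'v) \<Rightarrow> (nat \<Rightarrow> 'v set)
     \<Rightarrow> (nat \<Rightarrow> nat \<Rightarrow> ('g::group_add) morph \<Rightarrow> 'v \<Rightarrow> 'v) \<Rightarrow> bool" where
  "fig_module sc C act = is_sqm sc (C, (\<lambda>_. {0}), act)"

text \<open>Generated in degree <= m: the image of the map from a direct sum of M(n_i), n_i <= m,
(determined via Yoneda by elements x_i in degree n_i) is everything, i.e. every degree-j piece
is spanned (modulo N j) by the images of elements of degree <= m.\<close>
definition gen_sqm :: "('k::comm_ring_1 \<Rightarrow> 'u::ab_group_add \<Rightarrow> 'u) \<Rightarrow> ('u, 'g::group_add) sqm \<Rightarrow> nat \<Rightarrow> bool" where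
  "gen_sqm sc X m = (case X of (C, N, act) \<Rightarrow>
     (\<forall>j. C j \<subseteq> setplus (module.span sc {act n j phi x | n x phi. n \<le> m \<and> x \<in> C n \<and> phi \<in> hom n j}) (N j)))"

definition generated_in_degree :: "('k::comm_ring_1 \<Rightarrow> 'v::ab_group_add \<Rightarrow> 'v) \<Rightarrow> (nat \<Rightarrow> 'v set)
     \<Rightarrow> (nat \<Rightarrow> nat \<Rightarrow> ('g::group_add) morph \<Rightarrow> 'v \<Rightarrow> 'v) \<Rightarrow> nat \<Rightarrow> bool" where
  "generated_in_degree sc C act m = gen_sqm sc (C, (\<lambda>_. {0}), act) m"

text \<open>DX = coker(iota : X -> SX): (DX)_n = X_{n+1} / iota(X_n), with action through Sigma.\<close>
definition Dop :: "('u::ab_group_add, 'g::group_add) sqm \<Rightarrow> ('u, 'g) sqm" where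
  "Dop X = (case X of (C, N, act) \<Rightarrow>
     (\<lambda>n. C (Suc n),
      \<lambda>n. setplus (N (Suc n)) (act n (Suc n) (incl n) ` C n),
      \<lambda>n m phi. act (Suc n) (Suc m) (sigma n m phi)))"

text \<open>Ambient module of finitely supported k-valued functions with pointwise scaling.\<close>
definition fsc :: "'k::comm_ring_1 \<Rightarrow> ('a \<Rightarrow> 'k) \<Rightarrow> ('a \<Rightarrow> 'k)" where
  "fsc c p = (\<lambda>x. c * p x)"

definition delta :: "'a \<Rightarrow> ('a \<Rightarrow> 'k::comm_ring_1)" where
  "delta a = (\<lambda>y. if y = a then 1 else 0)"

text \<open>Action of psi : [j] -> [l] on formal combinations of triples (index, element, phi)
with phi : [deg i] -> [j]: the basis element (i,x,phi) goes to (i,x,psi o phi).\<close>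
definition indact :: "('i \<Rightarrow> nat) \<Rightarrow> nat \<Rightarrow> nat \<Rightarrow> ('g::group_add) morph
     \<Rightarrow> ('i \<times> 'x \<times> 'g morph \<Rightarrow> 'k::comm_ring_1) \<Rightarrow> ('i \<times> 'x \<times> 'g morph \<Rightarrow> 'k)" where
  "indact deg j l psi p = (\<lambda>(i, x, chi).
      \<Sum>phi \<in> {phi \<in> hom (deg i) j. comp (deg i) psi phi = chi}. p (i, x, phi))"

text \<open>Canonical free cover P of V: the direct sum of copies of M(n), one for every element v of
V_n (all n); P_j has k-basis the triples (n, v, phi) with v in V_n, phi : [n] -> [j].\<close>
definition Pcar :: "(nat \<Rightarrow> 'v set) \<Rightarrow> nat \<Rightarrow> (nat \<times> 'v \<times> ('g::group_add) morph \<Rightarrow> 'k::comm_ring_1) set" where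
  "Pcar C j = {p. finite {t. p t \<noteq> 0} \<and>
                  (\<forall>n v phi. p (n, v, phi) \<noteq> 0 \<longrightarrow> v \<in> C n \<and> phi \<in> hom n j)}"

definition Pproj :: "('k::comm_ring_1 \<Rightarrow> 'v::ab_group_add \<Rightarrow> 'v) \<Rightarrow> (nat \<Rightarrow> nat \<Rightarrow> ('g::group_add) morph \<Rightarrow> 'v \<Rightarrow> 'v)
     \<Rightarrow> nat \<Rightarrow> (nat \<times> 'v \<times> 'g morph \<Rightarrow> 'k) \<Rightarrow> 'v" where
  "Pproj sc act j p = (\<Sum>t \<in> {t. p t \<noteq> 0}. case t of (n, v, phi) \<Rightarrow> sc (p t) (act n j phi v))"

definition Psqm :: "(nat \<Rightarrow> 'v set) \<Rightarrow> (nat \<times> 'v \<times> ('g::group_add) morph \<Rightarrow> 'k::comm_ring_1, 'g) sqm" where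
  "Psqm C = (Pcar C, (\<lambda>_. {0}), indact (\<lambda>n. n))"

definition Ksqm :: "('k::comm_ring_1 \<Rightarrow> 'v::ab_group_add \<Rightarrow> 'v) \<Rightarrow> (nat \<Rightarrow> 'v set)
     \<Rightarrow> (nat \<Rightarrow> nat \<Rightarrow> ('g::group_add) morph \<Rightarrow> 'v \<Rightarrow> 'v) \<Rightarrow> (nat \<times> 'v \<times> 'g morph \<Rightarrow> 'k, 'g) sqm" where
  "Ksqm sc C act = ((\<lambda>j. {p \<in> Pcar C j. Pproj sc act j p = 0}), (\<lambda>_. {0}), indact (\<lambda>n. n))"

text \<open>H_1^{D^a}(V) = ker(D^a K -> D^a P) for the projective presentation 0 -> K -> P -> V -> 0
(P projective, H_1 of P vanishes, D^a right exact). The map is induced by the inclusion K <= P,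
so it vanishes iff in every degree j, an element of (D^a K)_j that is zero in (D^a P)_j is
already zero in (D^a K)_j.\<close>
definition H1D_vanishes :: "('k::comm_ring_1 \<Rightarrow> 'v::ab_group_add \<Rightarrow> 'v) \<Rightarrow> (nat \<Rightarrow> 'v set)
     \<Rightarrow> (nat \<Rightarrow> nat \<Rightarrow> ('g::group_add) morph \<Rightarrow> 'v \<Rightarrow> 'v) \<Rightarrow> nat \<Rightarrow> bool" where
  "H1D_vanishes sc C act a =
     (let DK = (Dop ^^ a) (Ksqm sc C act); DP = (Dop ^^ a) (Psqm C :: (_ \<Rightarrow> 'k, _) sqm) in
      \<forall>j. \<forall>x \<in> fst DK j. x \<in> fst (snd DP) j \<longrightarrow> x \<in> fst (snd DK) j)"

definition depth :: "('k::comm_ring_1 \<Rightarrow> 'v::ab_group_add \<Rightarrow> 'v) \<Rightarrow> (nat \<Rightarrow> 'v set)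
     \<Rightarrow> (nat \<Rightarrow> nat \<Rightarrow> ('g::group_add) morph \<Rightarrow> 'v \<Rightarrow> 'v) \<Rightarrow> enat" where
  "depth sc C act = Inf (enat ` {a. \<not> H1D_vanishes sc C act (Suc a)})"

text \<open>A k[G_n]-module W (carrier Wc inside the ambient module, G_n = Hom([n],[n]) acting on
the left by Wact).\<close>
definition kGn_module :: "('k::comm_ring_1 \<Rightarrow> 'v::ab_group_add \<Rightarrow> 'v) \<Rightarrow> nat \<Rightarrow> 'v set
     \<Rightarrow> (('g::group_add) morph \<Rightarrow> 'v \<Rightarrow> 'v) \<Rightarrow> bool" where
  "kGn_module sc n Wc Wact =
     (module sc \<and> module.subspace sc Wc
    \<and> (\<forall>s \<in> hom n n. (\<forall>w\<in>Wc. Wact s w \<in> Wc)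
          \<and> (\<forall>w\<in>Wc. \<forall>w'\<in>Wc. Wact s (w + w') = Wact s w + Wact s w')
          \<and> (\<forall>c. \<forall>w\<in>Wc. Wact s (sc c w) = sc c (Wact s w)))
    \<and> (\<forall>w\<in>Wc. Wact (idm n) w = w)
    \<and> (\<forall>s \<in> hom n n. \<forall>t \<in> hom n n. \<forall>w\<in>Wc. Wact (comp n s t) w = Wact s (Wact t w)))"

text \<open>The direct sum over i in I of M(W_i), W_i a k[G_{deg i}]-module:
M(W)_j = W (x)_{k[G_n]} k[Hom([n],[j])], realised as the free k-module on pairs (w, phi)
modulo bilinearity in w and the balancing relations (s w) (x) phi = w (x) (phi o s).\<close>
definition RPcar :: "nat set \<Rightarrow> (nat \<Rightarrow> nat) \<Rightarrow> (nat \<Rightarrow> 'v set) \<Rightarrow> nat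
     \<Rightarrow> (nat \<times> 'v \<times> ('g::group_add) morph \<Rightarrow> 'k::comm_ring_1) set" where
  "RPcar I deg Wc j = {p. finite {t. p t \<noteq> 0} \<and>
       (\<forall>i w phi. p (i, w, phi) \<noteq> 0 \<longrightarrow> i \<in> I \<and> w \<in> Wc i \<and> phi \<in> hom (deg i) j)}"

definition RPrel :: "('k::comm_ring_1 \<Rightarrow> 'v::ab_group_add \<Rightarrow> 'v) \<Rightarrow> nat set \<Rightarrow> (nat \<Rightarrow> nat) \<Rightarrow> (nat \<Rightarrow> 'v set)
     \<Rightarrow> (nat \<Rightarrow> ('g::group_add) morph \<Rightarrow> 'v \<Rightarrow> 'v) \<Rightarrow> nat \<Rightarrow> (nat \<times> 'v \<times> 'g morph \<Rightarrow> 'k) set" where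
  "RPrel sc I deg Wc Wact j = module.span fsc (
       {delta (i, w + w', phi) - delta (i, w, phi) - delta (i, w', phi) | i w w' phi.
            i \<in> I \<and> w \<in> Wc i \<and> w' \<in> Wc i \<and> phi \<in> hom (deg i) j}
     \<union> {delta (i, sc c w, phi) - fsc c (delta (i, w, phi)) | i c w phi.
            i \<in> I \<and> w \<in> Wc i \<and> phi \<in> hom (deg i) j}
     \<union> {delta (i, Wact i s w, phi) - delta (i, w, comp (deg i) phi s) | i s w phi.
            i \<in> I \<and> s \<in> hom (deg i) (deg i) \<and> w \<in> Wc i \<and> phi \<in> hom (deg i) j})"

definition RPsqm :: "('k::comm_ring_1 \<Rightarrow> 'v::ab_group_add \<Rightarrow> 'v) \<Rightarrow> nat set \<Rightarrow> (nat \<Rightarrow> nat) \<Rightarrow> (nat \<Rightarrow> 'v set)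
     \<Rightarrow> (nat \<Rightarrow> ('g::group_add) morph \<Rightarrow> 'v \<Rightarrow> 'v) \<Rightarrow> (nat \<times> 'v \<times> 'g morph \<Rightarrow> 'k, 'g) sqm" where
  "RPsqm sc I deg Wc Wact = (RPcar I deg Wc, RPrel sc I deg Wc Wact, indact deg)"

text \<open>Related in degree <= r: there is an exact sequence 0 -> K -> M -> V -> 0 with M a direct
sum of modules M(W_i) and K generated in degree <= r. The map M -> V is given by k-linear maps
pi j on the representatives, killing the relations, natural, and surjective; K is its kernel
(a subquotient of M).\<close>
definition related_in_degree :: "('k::comm_ring_1 \<Rightarrow> 'v::ab_group_add \<Rightarrow> 'v) \<Rightarrow> (nat \<Rightarrow> 'v set)
     \<Rightarrow> (nat \<Rightarrow> nat \<Rightarrow> ('g::group_add) morph \<Rightarrow> 'v \<Rightarrow> 'v) \<Rightarrow> nat \<Rightarrow> bool" where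
  "related_in_degree sc C act r =
     (\<exists>I deg Wc Wact (pi :: nat \<Rightarrow> (nat \<times> 'v \<times> 'g morph \<Rightarrow> 'k) \<Rightarrow> 'v).
        (\<forall>i\<in>I. kGn_module sc (deg i) (Wc i) (Wact i))
      \<and> (\<forall>j. \<forall>p \<in> RPcar I deg Wc j. pi j p \<in> C j)
      \<and> (\<forall>j. \<forall>p \<in> RPcar I deg Wc j. \<forall>q \<in> RPcar I deg Wc j. pi j (p + q) = pi j p + pi j q)
      \<and> (\<forall>j c. \<forall>p \<in> RPcar I deg Wc j. pi j (fsc c p) = sc c (pi j p))
      \<and> (\<forall>j. \<forall>p \<in> RPrel sc I deg Wc Wact j. pi j p = 0)
      \<and> (\<forall>n m phi. phi \<in> hom n m \<longrightarrow>
           (\<forall>p \<in> RPcar I deg Wc n. pi m (indact deg n m phi p) = act n m phi (pi n p)))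
      \<and> (\<forall>j. pi j ` RPcar I deg Wc j = C j)
      \<and> gen_sqm fsc ((\<lambda>j. {p \<in> RPcar I deg Wc j. pi j p = 0}), RPrel sc I deg Wc Wact, indact deg) r)"

definition presented_in_finite_degree :: "('k::comm_ring_1 \<Rightarrow> 'v::ab_group_add \<Rightarrow> 'v) \<Rightarrow> (nat \<Rightarrow> 'v set)
     \<Rightarrow> (nat \<Rightarrow> nat \<Rightarrow> ('g::group_add) morph \<Rightarrow> 'v \<Rightarrow> 'v) \<Rightarrow> bool" where
  "presented_in_finite_degree sc C act =
     ((\<exists>m. generated_in_degree sc C act m) \<and> (\<exists>r. related_in_degree sc C act r))"

end

theory Submission
  imports Defs
begin

text \<open>
  Let P \<rightarrow> V be the canonical free cover, with one copy of M(n) for every element of V_n,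
  let K be its kernel, and let M \<subseteq> P be the sum of the copies with n \<le> m; since V is
  generated in degree \<le> m, already M \<rightarrow> V is onto. We show by induction on J that the kernel
  of M \<rightarrow> V is generated in degree \<le> m. Let J + 1 = j + m + 1 > m and let p lie in that kernel
  in degree J + 1. An injection [n] \<rightarrow> [J + 1] with n \<le> m misses one of the m + 1 points
  j, ..., j + m, so it factors through an iterated shift of a standard inclusion, and p dies in
  (D^(m+1) P)_j. As H_1^(D^(m+1))(V) = 0, p already dies in (D^(m+1) K)_j, i.e. it is a
  combination of images of elements of K_J. A retraction P \<rightarrow> M over V that commutes with the
  FI_G-action turns these into images of elements of the kernel of M \<rightarrow> V in degree J, which
  closes the induction.
\<close>

lemma hom_iff: "phi \<in> hom n m \<longleftrightarrow> inj_on (fst phi) {..<n} \<and> fst phi ` {..<n} \<subseteq> {..<m}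
    \<and> (\<forall>x\<ge>n. fst phi x = 0) \<and> (\<forall>x\<ge>n. snd phi x = 0)"
  by (cases phi) (simp add: hom_def)

lemma hom_lt: "phi \<in> hom n m \<Longrightarrow> x < n \<Longrightarrow> fst phi x < m"
  unfolding hom_iff by auto

lemma hom_comp: "phi \<in> hom n m \<Longrightarrow> psi \<in> hom m l \<Longrightarrow> comp n psi phi \<in> hom n l"
  unfolding hom_iff comp_def by (auto simp: inj_on_def image_subset_iff)

lemma idm_hom: "idm n \<in> hom n n"
  unfolding hom_iff idm_def by (auto simp: inj_on_def)

lemma comp_assoc: "phi \<in> hom n m \<Longrightarrow> comp n chi (comp n psi phi) = comp n (comp m chi psi) phi"
  by (auto simp: comp_def fun_eq_iff hom_lt add.assoc)

lemma comp_idm_left: "phi \<in> hom n m \<Longrightarrow> comp n (idm m) phi = phi"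
  unfolding hom_iff comp_def idm_def
  by (cases phi) (auto simp: fun_eq_iff image_subset_iff not_less)

lemma comp_idm_right: "phi \<in> hom n m \<Longrightarrow> comp n phi (idm n) = phi"
  unfolding hom_iff comp_def idm_def
  by (cases phi) (auto simp: fun_eq_iff not_less)

lemma comp_cancel_left:
  assumes psi: "psi \<in> hom m l" and phi1: "phi1 \<in> hom n m" and phi2: "phi2 \<in> hom n m"
    and eq: "comp n psi phi1 = comp n psi phi2"
  shows "phi1 = phi2"
proof -
  have "fst phi1 x = fst phi2 x \<and> snd phi1 x = snd phi2 x" for x
  proof (cases "x < n")
    case True
    from eq True have "fst psi (fst phi1 x) = fst psi (fst phi2 x)"
      and snd_eq: "snd phi1 x + snd psi (fst phi1 x) = snd phi2 x + snd psi (fst phi2 x)"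
      by (simp_all add: comp_def fun_eq_iff) meson+
    moreover have "fst phi1 x < m" "fst phi2 x < m"
      using hom_lt phi1 phi2 True by blast+
    ultimately have "fst phi1 x = fst phi2 x"
      using psi unfolding hom_iff inj_on_def by blast
    with snd_eq show ?thesis by simp
  next
    case False
    with phi1 phi2 show ?thesis unfolding hom_iff by auto
  qed
  then show ?thesis by (simp add: prod_eq_iff fun_eq_iff)
qed

text \<open>The coface map \<open>[n] \<rightarrow> [n + 1]\<close> whose image misses \<open>k\<close>.\<close>

definition skip :: "nat \<Rightarrow> nat \<Rightarrow> ('g::group_add) morph" where
  "skip k n = (\<lambda>x. if x < n then (if x < k then x else Suc x) else 0, \<lambda>x. 0)"

lemma skip_hom: "skip k n \<in> hom n (Suc n)"
  unfolding hom_iff skip_def by (auto simp: inj_on_def)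

lemma incl_eq_skip: "incl n = skip n n"
  by (auto simp: incl_def idm_def skip_def fun_eq_iff)

lemma sigma_skip: "k \<le> n \<Longrightarrow> sigma n (Suc n) (skip k n) = skip k (Suc n)"
  by (auto simp: sigma_def skip_def fun_eq_iff)

lemma factor_through_skip:
  assumes chi: "chi \<in> hom n (Suc J)" and k: "k \<notin> fst chi ` {..<n}" "k \<le> J"
  obtains psi where "psi \<in> hom n J" "comp n (skip k J) psi = chi"
proof
  define u where "u c = (if c < k then c else c - 1)" for c
  define psi :: "'a morph" where "psi = (\<lambda>x. if x < n then u (fst chi x) else 0, snd chi)"
  have lt: "fst chi x < Suc J" and ne: "fst chi x \<noteq> k" if "x < n" for x
    using hom_lt[OF chi that] k(1) that by auto
  have inj: "inj_on (fst chi) {..<n}" and snd0: "\<forall>x\<ge>n. snd chi x = 0"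
    using chi unfolding hom_iff by blast+
  have "inj_on (fst psi) {..<n}"
  proof (rule inj_onI)
    fix x y assume "x \<in> {..<n}" "y \<in> {..<n}" "fst psi x = fst psi y"
    moreover from this have "fst chi x = fst chi y"
      using ne[of x] ne[of y] by (auto simp: psi_def u_def split: if_splits)
    ultimately show "x = y" using inj by (auto dest: inj_onD)
  qed
  moreover have "fst psi ` {..<n} \<subseteq> {..<J}"
    using lt ne k(2) by (fastforce simp: psi_def u_def)
  ultimately show "psi \<in> hom n J"
    using snd0 unfolding hom_iff by (simp add: psi_def)
  have "fst (comp n (skip k J) psi) x = fst chi x" for x
  proof (cases "x < n")
    case True
    with lt[OF True] ne[OF True] k(2) show ?thesis
      by (auto simp: comp_def skip_def psi_def u_def)
  next
    case False
    with chi show ?thesis unfolding hom_iff by (simp add: comp_def)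
  qed
  moreover have "snd (comp n (skip k J) psi) x = snd chi x" for x
    using snd0 by (simp add: comp_def skip_def psi_def)
  ultimately show "comp n (skip k J) psi = chi"
    by (simp add: prod_eq_iff fun_eq_iff)
qed

lemma inj_on_comp_skip:
  "inj_on (\<lambda>t. (fst t, fst (snd t), comp (fst t) (skip k J) (snd (snd t)) :: ('g::group_add) morph))
     {t :: nat \<times> 'x \<times> 'g morph. snd (snd t) \<in> hom (fst t) J}"
proof (rule inj_onI)
  fix s t :: "nat \<times> 'x \<times> 'g morph"
  assume "s \<in> {t. snd (snd t) \<in> hom (fst t) J}" "t \<in> {t. snd (snd t) \<in> hom (fst t) J}"
    and eq: "(fst s, fst (snd s), comp (fst s) (skip k J) (snd (snd s))) =
      (fst t, fst (snd t), comp (fst t) (skip k J) (snd (snd t)))"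
  moreover from eq have "fst s = fst t" "fst (snd s) = fst (snd t)"
    by simp_all
  moreover from eq \<open>fst s = fst t\<close>
  have "comp (fst t) (skip k J) (snd (snd s)) = comp (fst t) (skip k J) (snd (snd t))"
    by simp
  ultimately show "s = t"
    using comp_cancel_left[OF skip_hom] by (simp add: prod_eq_iff)
qed

lemma exists_not_in_image_lessThan:
  assumes "n < card B"
  shows "\<exists>b\<in>B. b \<notin> f ` {..<n}"
proof (rule ccontr)
  assume "\<not> ?thesis"
  then have "card B \<le> card (f ` {..<n})"
    by (intro card_mono) auto
  also have "\<dots> \<le> n"
    using card_image_le[of "{..<n}" f] by simp
  finally show False using assms by simp
qed

section \<open>Iterates of the functor D\<close>

text \<open>The second component of an sqm X is the submodule by which X is divided, so
  fst (snd ((Dop ^^ a) X)) j is what dies in (D^a X)_j.\<close>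

lemma setplus_zero: "setplus A {0} = A"
  by (auto simp: setplus_def)

lemma subset_setplus: "0 \<in> B \<Longrightarrow> A \<subseteq> setplus A B"
  unfolding setplus_def by force

lemma Dop_conv: "Dop X = (\<lambda>n. fst X (Suc n),
   \<lambda>n. setplus (fst (snd X) (Suc n)) (snd (snd X) n (Suc n) (incl n) ` fst X n),
   \<lambda>n m phi. snd (snd X) (Suc n) (Suc m) (sigma n m phi))"
  by (cases X) (simp add: Dop_def)

lemma Dop_pow_carrier: "fst ((Dop ^^ a) X) n = fst X (n + a)"
  by (induction a arbitrary: n) (auto simp: Dop_conv)

lemma Dop_pow_act_skip:
  "k \<le> n \<Longrightarrow>
    snd (snd ((Dop ^^ a) X)) n (Suc n) (skip k n) = snd (snd X) (n + a) (Suc (n + a)) (skip k (n + a))"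
proof (induction a arbitrary: X)
  case (Suc a)
  then show ?case
    by (simp only: funpow_Suc_right o_apply) (simp add: Dop_conv sigma_skip)
qed simp

lemma Dop_pow_Suc_rel: "fst (snd ((Dop ^^ Suc a) X)) n =
    setplus (fst (snd ((Dop ^^ a) X)) (Suc n))
      (snd (snd X) (n + a) (Suc (n + a)) (skip n (n + a)) ` fst X (n + a))"
  by (simp add: Dop_conv Dop_pow_carrier Dop_pow_act_skip incl_eq_skip)

lemma module_fsc: "module (fsc :: 'k::comm_ring_1 \<Rightarrow> ('a \<Rightarrow> 'k) \<Rightarrow> _)"
  by unfold_locales (auto simp: fsc_def fun_eq_iff algebra_simps)

lemma fsc_apply [simp]: "fsc c p x = c * p x"
  by (simp add: fsc_def)

lemma sum_fun_apply: "(\<Sum>i\<in>A. f i) x = (\<Sum>i\<in>A. f i x)"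
  by (induction A rule: infinite_finite_induct) auto

lemma sum_delta_eq:
  fixes p :: "'a \<Rightarrow> 'k::comm_ring_1"
  assumes "finite {t. p t \<noteq> 0}"
  shows "(\<Sum>t\<in>{t. p t \<noteq> 0}. fsc (p t) (delta t)) = p"
proof
  fix x
  have "(\<Sum>t\<in>{t. p t \<noteq> 0}. fsc (p t) (delta t)) x = (\<Sum>t\<in>{t. p t \<noteq> 0}. if x = t then p t else 0)"
    unfolding sum_fun_apply by (rule sum.cong) (auto simp: delta_def)
  also have "\<dots> = p x"
    using assms by auto
  finally show "(\<Sum>t\<in>{t. p t \<noteq> 0}. fsc (p t) (delta t)) x = p x" .
qed

locale linear_on = module_pair s1 s2
  for s1 :: "'k::comm_ring_1 \<Rightarrow> 'a::ab_group_add \<Rightarrow> 'a" and s2 :: "'k \<Rightarrow> 'b::ab_group_add \<Rightarrow> 'b" +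
  fixes S :: "'a set" and f :: "'a \<Rightarrow> 'b"
  assumes subspace: "m1.subspace S"
    and add: "x \<in> S \<Longrightarrow> y \<in> S \<Longrightarrow> f (x + y) = f x + f y"
    and scale: "x \<in> S \<Longrightarrow> f (s1 c x) = s2 c (f x)"
begin

lemma zero: "f 0 = 0"
  using add[of 0 0] m1.subspace_0[OF subspace] by simp

lemma diff: "x \<in> S \<Longrightarrow> y \<in> S \<Longrightarrow> f (x - y) = f x - f y"
  using add[of "x - y" y] m1.subspace_diff[OF subspace] by (simp add: algebra_simps)

lemma subspace_kernel: "m1.subspace {x \<in> S. f x = 0}"
  using subspace zero add scale m1.subspace_0 m1.subspace_add m1.subspace_scale
  unfolding m1.subspace_def by auto

lemma subspace_image:
  assumes T: "m1.subspace T" "T \<subseteq> S"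
  shows "m2.subspace (f ` T)"
  unfolding m2.subspace_def
proof (intro conjI ballI allI)
  show "0 \<in> f ` T"
    using zero m1.subspace_0[OF T(1)] by (metis image_eqI)
  fix y z assume "y \<in> f ` T" "z \<in> f ` T"
  then obtain a b where "a \<in> T" "b \<in> T" "y = f a" "z = f b"
    by blast
  with T show "y + z \<in> f ` T"
    using add m1.subspace_add by (metis image_eqI subsetD)
next
  fix c y assume "y \<in> f ` T"
  then obtain a where "a \<in> T" "y = f a"
    by blast
  with T show "s2 c y \<in> f ` T"
    using scale m1.subspace_scale by (metis image_eqI subsetD)
qed

lemma image_span_subset:
  assumes X: "X \<subseteq> S"
  shows "f ` m1.span X \<subseteq> m2.span (f ` X)"
proof clarify
  fix x assume "x \<in> m1.span X"
  then have "x \<in> S \<and> f x \<in> m2.span (f ` X)"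
  proof (induction rule: m1.span_induct_alt)
    case base
    then show ?case
      using zero m1.subspace_0[OF subspace] m2.span_zero by simp
  next
    case (step c x y)
    with X have "x \<in> S" by blast
    with step show ?case
      using add scale m1.subspace_add[OF subspace] m1.subspace_scale[OF subspace]
        m2.span_add m2.span_scale m2.span_base[of "f x" "f ` X"] by auto
  qed
  then show "f x \<in> m2.span (f ` X)" ..
qed

lemma span_image:
  assumes X: "X \<subseteq> S"
  shows "m2.span (f ` X) = f ` m1.span X"
proof
  show "m2.span (f ` X) \<subseteq> f ` m1.span X"
    using m1.span_superset m1.subspace_span m1.span_minimal[OF X subspace]
    by (intro m2.span_minimal subspace_image) auto
  show "f ` m1.span X \<subseteq> m2.span (f ` X)"
    by (rule image_span_subset[OF X])
qed

lemma eq_on_span: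
  assumes g: "linear_on s1 s2 S g" and X: "X \<subseteq> S"
    and eq: "\<And>x. x \<in> X \<Longrightarrow> f x = g x" and x: "x \<in> m1.span X"
  shows "f x = g x"
proof -
  from x have "x \<in> S \<and> f x = g x"
  proof (induction rule: m1.span_induct_alt)
    case base
    then show ?case
      using zero linear_on.zero[OF g] m1.subspace_0[OF subspace] by simp
  next
    case (step c x y)
    with X have "x \<in> S" by blast
    with step show ?case
      using add scale linear_on.add[OF g] linear_on.scale[OF g] eq[of x]
        m1.subspace_add[OF subspace] m1.subspace_scale[OF subspace] by auto
  qed
  then show ?thesis ..
qed

end

lemma linear_on_comp:
  assumes f: "linear_on s1 s2 S f" and g: "linear_on s2 s3 T g" and "f ` S \<subseteq> T"
  shows "linear_on s1 s3 S (\<lambda>x. g (f x))"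
proof -
  interpret f: linear_on s1 s2 S f by (rule f)
  interpret g: linear_on s2 s3 T g by (rule g)
  show ?thesis
    by unfold_locales
      (use assms(3) f.subspace f.m1.subspace_add f.m1.subspace_scale in
        \<open>auto simp: f.add f.scale g.add g.scale image_subset_iff\<close>)
qed

lemma (in module_hom) linear_on: "m1.subspace S \<Longrightarrow> linear_on s1 s2 S f"
  by unfold_locales (simp_all add: add scale)

definition lin_ext :: "('k::comm_ring_1 \<Rightarrow> 'u::ab_group_add \<Rightarrow> 'u) \<Rightarrow> ('b \<Rightarrow> 'u) \<Rightarrow> ('b \<Rightarrow> 'k) \<Rightarrow> 'u"
  where "lin_ext s R p = (\<Sum>t\<in>{t. p t \<noteq> 0}. s (p t) (R t))"

context module
begin

lemma lin_ext_superset: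
  assumes "finite T" "{t. p t \<noteq> 0} \<subseteq> T"
  shows "lin_ext scale R p = (\<Sum>t\<in>T. scale (p t) (R t))"
  unfolding lin_ext_def using assms by (intro sum.mono_neutral_left) auto

lemma lin_ext_delta: "lin_ext scale R (delta a) = R a"
  by (simp add: lin_ext_def delta_def)

lemma lin_ext_linear_on:
  assumes S: "module.subspace fsc S" and fin: "\<And>p. p \<in> S \<Longrightarrow> finite {t. p t \<noteq> 0}"
  shows "linear_on fsc scale S (lin_ext scale R)"
proof (intro linear_on.intro module_pair.intro linear_on_axioms.intro module_fsc module_axioms S)
  fix p q assume p: "p \<in> S" and q: "q \<in> S"
  let ?T = "{t. p t \<noteq> 0} \<union> {t. q t \<noteq> 0}"
  have "finite ?T"
    using fin p q by blast
  then show "lin_ext scale R (p + q) = lin_ext scale R p + lin_ext scale R q"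
    by (subst (1 2 3) lin_ext_superset[where T = ?T]) (auto simp: scale_left_distrib sum.distrib)
next
  fix c p assume p: "p \<in> S"
  then show "lin_ext scale R (fsc c p) = scale c (lin_ext scale R p)"
    by (subst (1 2) lin_ext_superset[where T = "{t. p t \<noteq> 0}"])
      (auto simp: fin scale_sum_right)
qed

end

section \<open>Free FI_G-modules\<close>

text \<open>
  Mcar I W j is the degree-j part of the free FI_G-module on the elements of the W i, i \<in> I,
  an element w \<in> W i sitting in degree i: it has basis the triples (i, w, phi) with
  phi : [i] \<rightarrow> [j], and Mact is the FI_G-action on it.
\<close>

abbreviation Mcar :: "nat set \<Rightarrow> (nat \<Rightarrow> 'x set) \<Rightarrow> nat
    \<Rightarrow> (nat \<times> 'x \<times> ('g::group_add) morph \<Rightarrow> 'k::comm_ring_1) set"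
  where "Mcar I W j \<equiv> RPcar I (\<lambda>n. n) W j"

abbreviation Mact :: "nat \<Rightarrow> nat \<Rightarrow> ('g::group_add) morph
    \<Rightarrow> (nat \<times> 'x \<times> 'g morph \<Rightarrow> 'k::comm_ring_1) \<Rightarrow> (nat \<times> 'x \<times> 'g morph \<Rightarrow> 'k)"
  where "Mact \<equiv> indact (\<lambda>n. n)"

definition Mbasis :: "nat set \<Rightarrow> (nat \<Rightarrow> 'x set) \<Rightarrow> nat
    \<Rightarrow> (nat \<times> 'x \<times> ('g::group_add) morph \<Rightarrow> 'k::comm_ring_1) set"
  where "Mbasis I W j = {delta (i, w, phi) | i w phi. i \<in> I \<and> w \<in> W i \<and> phi \<in> hom i j}"

lemma Mcar_finite_supp: "p \<in> RPcar I d W j \<Longrightarrow> finite {t. p t \<noteq> 0}"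
  by (simp add: RPcar_def)

lemma Mcar_supp: "p \<in> Mcar I W j \<Longrightarrow> p (i, w, phi) \<noteq> 0 \<Longrightarrow> i \<in> I \<and> w \<in> W i \<and> phi \<in> hom i j"
  by (cases phi) (simp add: RPcar_def)

lemma Mcar_mono: "I \<subseteq> I' \<Longrightarrow> RPcar I d W j \<subseteq> RPcar I' d W j"
  by (auto simp: RPcar_def)

lemma Pcar_eq_Mcar: "Pcar C j = Mcar UNIV C j"
  by (simp add: Pcar_def RPcar_def)

lemma Psqm_eq: "Psqm C = (Mcar UNIV C, \<lambda>_. {0}, Mact)"
  by (simp add: Psqm_def Pcar_eq_Mcar fun_eq_iff)

lemma Mcar_subspace:
  "module.subspace fsc (RPcar I d W j :: (nat \<times> 'x \<times> ('g::group_add) morph \<Rightarrow> 'k::comm_ring_1) set)"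
  unfolding module.subspace_def[OF module_fsc]
proof (intro conjI ballI allI)
  show "0 \<in> RPcar I d W j"
    by (simp add: RPcar_def)
  fix c and p q :: "nat \<times> 'x \<times> 'g morph \<Rightarrow> 'k"
  assume p: "p \<in> RPcar I d W j" and q: "q \<in> RPcar I d W j"
  have "{t. (p + q) t \<noteq> 0} \<subseteq> {t. p t \<noteq> 0} \<union> {t. q t \<noteq> 0}"
    by auto
  with p q show "p + q \<in> RPcar I d W j"
    unfolding RPcar_def by (auto intro: finite_subset)
  have "{t. fsc c p t \<noteq> 0} \<subseteq> {t. p t \<noteq> 0}"
    by auto
  with p show "fsc c p \<in> RPcar I d W j"
    unfolding RPcar_def by (auto intro: finite_subset)
qed

lemma delta_Mcar: "i \<in> I \<Longrightarrow> w \<in> W i \<Longrightarrow> phi \<in> hom (d i) j \<Longrightarrow> delta (i, w, phi) \<in> RPcar I d W j"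
  by (auto simp: RPcar_def delta_def)

lemma delta_Mbasis: "i \<in> I \<Longrightarrow> w \<in> W i \<Longrightarrow> phi \<in> hom i j \<Longrightarrow> delta (i, w, phi) \<in> Mbasis I W j"
  unfolding Mbasis_def by blast

lemma Mbasis_subset: "Mbasis I W j \<subseteq> Mcar I W j"
  by (auto simp: Mbasis_def intro: delta_Mcar)

lemma Mcar_eq_span: "Mcar I W j = module.span fsc (Mbasis I W j)"
proof
  show "module.span fsc (Mbasis I W j) \<subseteq> Mcar I W j"
    by (rule module.span_minimal[OF module_fsc Mbasis_subset Mcar_subspace])
  show "Mcar I W j \<subseteq> module.span fsc (Mbasis I W j)"
  proof
    fix p assume p: "p \<in> Mcar I W j"
    have "delta t \<in> Mbasis I W j" if "p t \<noteq> 0" for t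
      using that Mcar_supp[OF p] unfolding Mbasis_def by (cases t) blast
    then have "(\<Sum>t\<in>{t. p t \<noteq> 0}. fsc (p t) (delta t)) \<in> module.span fsc (Mbasis I W j)"
      by (intro module.span_sum[OF module_fsc] module.span_scale[OF module_fsc]
          module.span_base[OF module_fsc]) simp
    then show "p \<in> module.span fsc (Mbasis I W j)"
      using sum_delta_eq[OF Mcar_finite_supp[OF p]] by simp
  qed
qed

lemma Mcar_linear_eqI:
  fixes f g :: "(nat \<times> 'x \<times> ('g::group_add) morph \<Rightarrow> 'k::comm_ring_1) \<Rightarrow> 'v::ab_group_add"
  assumes f: "linear_on fsc s (Mcar I W j) f" and g: "linear_on fsc s (Mcar I W j) g"
    and eq: "\<And>i w phi. i \<in> I \<Longrightarrow> w \<in> W i \<Longrightarrow> phi \<in> hom i j \<Longrightarrow> f (delta (i, w, phi)) = g (delta (i, w, phi))"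
    and p: "p \<in> Mcar I W j"
  shows "f p = g p"
proof (rule linear_on.eq_on_span[OF f g Mbasis_subset])
  fix b :: "nat \<times> 'x \<times> 'g morph \<Rightarrow> 'k"
  assume "b \<in> Mbasis I W j"
  then obtain i w phi where "b = delta (i, w, phi)" "i \<in> I" "w \<in> W i" "phi \<in> hom i j"
    unfolding Mbasis_def by blast
  then show "f b = g b"
    using eq by simp
qed (use p Mcar_eq_span in blast)

lemma Mact_module_hom: "module_hom fsc fsc (indact d j l psi)"
  unfolding module_hom_iff
  by (simp add: module_fsc indact_def fsc_def fun_eq_iff sum.distrib sum_distrib_left)

lemma Mact_linear_on: "linear_on fsc fsc (RPcar I d W j) (indact d j l psi)"
  by (rule module_hom.linear_on[OF Mact_module_hom Mcar_subspace])

lemma Mact_delta: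
  fixes x :: 'x and psi :: "('g::group_add) morph"
  assumes "psi \<in> hom j l" "phi \<in> hom i j"
  shows "Mact j l psi (delta (i, x, phi)) = delta (i, x, comp i psi phi)"
proof
  fix t :: "nat \<times> 'x \<times> 'g morph"
  obtain i' x' chi where t: "t = (i', x', chi)"
    by (cases t)
  show "Mact j l psi (delta (i, x, phi)) t = delta (i, x, comp i psi phi) t"
  proof (cases "i' = i \<and> x' = x \<and> chi = comp i psi phi")
    case True
    then have "{phi' \<in> hom i' j. comp i' psi phi' = chi} = {phi}"
      using assms comp_cancel_left by blast
    with True show ?thesis
      by (simp add: t indact_def delta_def)
  next
    case False
    then show ?thesis
      by (auto simp: t indact_def delta_def intro!: sum.neutral)
  qed
qed

lemma Mact_Mcar:
  assumes p: "p \<in> Mcar I W j" and psi: "psi \<in> hom j l"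
  shows "Mact j l psi p \<in> Mcar I W l"
proof -
  have "Mact j l psi b \<in> Mcar I W l" if "b \<in> Mbasis I W j" for b
  proof -
    from that obtain i w phi where "b = delta (i, w, phi)" "i \<in> I" "w \<in> W i" "phi \<in> hom i j"
      unfolding Mbasis_def by blast
    then show ?thesis
      by (simp add: Mact_delta[OF psi] delta_Mcar hom_comp[OF _ psi])
  qed
  then have "module.span fsc (Mact j l psi ` Mbasis I W j) \<subseteq> Mcar I W l"
    by (intro module.span_minimal[OF module_fsc _ Mcar_subspace]) blast
  with p show ?thesis
    unfolding Mcar_eq_span[of I W j] module_hom.span_image[OF Mact_module_hom] by blast
qed

lemma Mact_comp:
  fixes p :: "nat \<times> 'x \<times> ('g::group_add) morph \<Rightarrow> 'k::comm_ring_1"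
  assumes p: "p \<in> Mcar I W j" and phi: "phi \<in> hom j l" and psi: "psi \<in> hom l L"
  shows "Mact l L psi (Mact j l phi p) = Mact j L (comp j psi phi) p"
proof (rule Mcar_linear_eqI[OF linear_on_comp[OF Mact_linear_on Mact_linear_on] Mact_linear_on _ p])
  show "Mact j l phi ` Mcar I W j \<subseteq> Mcar I W l"
    using Mact_Mcar[OF _ phi] by blast
  fix i and w :: 'x and chi :: "'g morph"
  assume "chi \<in> hom i j"
  then show "Mact l L psi (Mact j l phi (delta (i, w, chi))) =
      Mact j L (comp j psi phi) (delta (i, w, chi))"
    by (simp add: Mact_delta phi psi hom_comp[OF _ phi] hom_comp[OF phi psi] comp_assoc)
qed

lemma Mact_idm:
  assumes p: "p \<in> Mcar I W j"
  shows "Mact j j (idm j) p = p"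
proof -
  have "Mact j j (idm j) p = id p"
    by (rule Mcar_linear_eqI[OF Mact_linear_on
          module_hom.linear_on[OF module.module_hom_id[OF module_fsc] Mcar_subspace] _ p])
      (simp add: Mact_delta idm_hom comp_idm_left)
  then show ?thesis
    by simp
qed

lemma Mcar_restrict: "p \<in> Mcar I W j \<Longrightarrow> (\<lambda>t. if P t then p t else 0) \<in> Mcar I W j"
  unfolding RPcar_def by (auto intro: finite_subset split: if_splits)

lemma Mcar_skip_image:
  fixes p :: "nat \<times> 'x \<times> ('g::group_add) morph \<Rightarrow> 'k::comm_ring_1"
  assumes p: "p \<in> Mcar I W (Suc J)" and k: "k \<le> J"
    and miss: "\<And>n v chi. p (n, v, chi) \<noteq> 0 \<Longrightarrow> k \<notin> fst chi ` {..<n}"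
  shows "p \<in> Mact J (Suc J) (skip k J) ` Mcar I W J"
proof
  define q where "q t = (if snd (snd t) \<in> hom (fst t) J
      then p (fst t, fst (snd t), comp (fst t) (skip k J) (snd (snd t))) else 0)" for t
  have "{t. q t \<noteq> 0} \<subseteq> (\<lambda>t. (fst t, fst (snd t), comp (fst t) (skip k J) (snd (snd t))))
      -` {t. p t \<noteq> 0} \<inter> {t. snd (snd t) \<in> hom (fst t) J}"
    by (auto simp: q_def split: if_splits)
  then have "finite {t. q t \<noteq> 0}"
    using finite_vimage_IntI[OF Mcar_finite_supp[OF p] inj_on_comp_skip] by (rule finite_subset)
  then show "q \<in> Mcar I W J"
    using Mcar_supp[OF p] by (auto simp: RPcar_def q_def split: if_splits)
  have "Mact J (Suc J) (skip k J) q (n, v, chi) = p (n, v, chi)" for n v chi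
  proof (cases "p (n, v, chi) = 0")
    case True
    then show ?thesis
      by (auto simp: indact_def q_def intro!: sum.neutral)
  next
    case False
    obtain psi0 where psi0: "psi0 \<in> hom n J" "comp n (skip k J) psi0 = chi"
      using factor_through_skip[OF _ miss[OF False] k] Mcar_supp[OF p False] by blast
    then have "{psi \<in> hom n J. comp n (skip k J) psi = chi} = {psi0}"
      using comp_cancel_left[OF skip_hom] by blast
    with psi0 show ?thesis
      by (simp add: indact_def q_def)
  qed
  then show "p = Mact J (Suc J) (skip k J) q"
    by (auto simp: fun_eq_iff)
qed

lemma Dop_pow_Suc_rel_free_subset_span:
  "fst (snd ((Dop ^^ Suc a) (K, \<lambda>_. {0}, Mact))) j \<subseteq>
     module.span fsc {Mact (j + a) (Suc (j + a)) psi q | psi q.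
       psi \<in> hom (j + a) (Suc (j + a)) \<and> q \<in> K (j + a)}"
proof (induction a arbitrary: j)
  case 0
  show ?case
  proof
    fix x assume "x \<in> fst (snd ((Dop ^^ Suc 0) (K, \<lambda>_. {0}, Mact))) j"
    then obtain q where "q \<in> K j" "x = Mact j (Suc j) (skip j j) q"
      unfolding Dop_pow_Suc_rel[of 0] by (auto simp: setplus_def)
    then show "x \<in> module.span fsc {Mact (j + 0) (Suc (j + 0)) psi q | psi q.
        psi \<in> hom (j + 0) (Suc (j + 0)) \<and> q \<in> K (j + 0)}"
      unfolding add_0_right using skip_hom by (intro module.span_base[OF module_fsc]) blast
  qed
next
  case (Suc a)
  let ?S = "module.span fsc {Mact (j + Suc a) (Suc (j + Suc a)) psi q | psi q.
      psi \<in> hom (j + Suc a) (Suc (j + Suc a)) \<and> q \<in> K (j + Suc a)}"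
  show ?case
  proof
    fix x assume "x \<in> fst (snd ((Dop ^^ Suc (Suc a)) (K, \<lambda>_. {0}, Mact))) j"
    then obtain y q where y: "y \<in> fst (snd ((Dop ^^ Suc a) (K, \<lambda>_. {0}, Mact))) (Suc j)"
      and q: "q \<in> K (j + Suc a)"
      and x: "x = y + Mact (j + Suc a) (Suc (j + Suc a)) (skip j (j + Suc a)) q"
      unfolding Dop_pow_Suc_rel[of "Suc a"] by (auto simp: setplus_def)
    have "Suc j + a = j + Suc a"
      by simp
    from subsetD[OF Suc.IH[of "Suc j", unfolded this] y] have "y \<in> ?S" .
    moreover have "Mact (j + Suc a) (Suc (j + Suc a)) (skip j (j + Suc a)) q \<in> ?S"
      using q skip_hom by (intro module.span_base[OF module_fsc]) blast
    ultimately show "x \<in> ?S"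
      unfolding x by (rule module.span_add[OF module_fsc])
  qed
qed

lemma free_mem_Dop_pow_rel:
  fixes p :: "nat \<times> 'x \<times> ('g::group_add) morph \<Rightarrow> 'k::comm_ring_1"
  assumes "p \<in> Mcar I W (j + a)"
    and "\<And>n v phi. p (n, v, phi) \<noteq> 0 \<Longrightarrow> \<exists>b\<in>{j..<j + a}. b \<notin> fst phi ` {..<n}"
  shows "p \<in> fst (snd ((Dop ^^ a) (Mcar I W, \<lambda>_. {0}, Mact))) j"
  using assms
proof (induction a arbitrary: j p)
  case 0
  then have "p = 0"
    by fastforce
  then show ?case
    by simp
next
  case (Suc a)
  \<comment> \<open>Basis elements hitting j are handled at j + 1 by induction; the others come from
    degree j + a through skip j.\<close>
  define hits where "hits t \<longleftrightarrow> j \<in> fst (snd (snd t)) ` {..<fst t}" for t :: "nat \<times> 'x \<times> 'g morph"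
  define p1 where "p1 = (\<lambda>t. if hits t then p t else 0)"
  define p2 where "p2 = (\<lambda>t. if \<not> hits t then p t else 0)"
  have "p1 \<in> fst (snd ((Dop ^^ a) (Mcar I W, \<lambda>_. {0}, Mact))) (Suc j)"
  proof (rule Suc.IH)
    show "p1 \<in> Mcar I W (Suc j + a)"
      using Mcar_restrict[OF Suc.prems(1), of hits] by (simp add: p1_def)
    fix n v phi assume "p1 (n, v, phi) \<noteq> 0"
    then have "j \<in> fst phi ` {..<n}" "p (n, v, phi) \<noteq> 0"
      by (auto simp: p1_def hits_def split: if_splits)
    with Suc.prems(2) show "\<exists>b\<in>{Suc j..<Suc j + a}. b \<notin> fst phi ` {..<n}"
      by (metis atLeastLessThan_iff add_Suc add_Suc_shift le_antisym not_less_eq_eq)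
  qed
  moreover have "p2 \<in> Mact (j + a) (Suc (j + a)) (skip j (j + a)) ` Mcar I W (j + a)"
  proof (rule Mcar_skip_image)
    show "p2 \<in> Mcar I W (Suc (j + a))"
      using Mcar_restrict[OF Suc.prems(1), of "\<lambda>t. \<not> hits t"] by (simp add: p2_def)
  qed (auto simp: p2_def hits_def split: if_splits)
  moreover have "p = p1 + p2"
    by (simp add: p1_def p2_def fun_eq_iff)
  ultimately show ?case
    unfolding Dop_pow_Suc_rel setplus_def fst_conv snd_conv by blast
qed

section \<open>The canonical presentation of an FI_G-module\<close>

locale fig_mod =
  fixes sc :: "'k::comm_ring_1 \<Rightarrow> 'v::ab_group_add \<Rightarrow> 'v"
    and C :: "nat \<Rightarrow> 'v set"
    and act :: "nat \<Rightarrow> nat \<Rightarrow> ('g::group_add) morph \<Rightarrow> 'v \<Rightarrow> 'v"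
  assumes fig_module: "fig_module sc C act"
begin

lemma module: "module sc"
  and subspace: "module.subspace sc (C n)"
  and act_closed: "phi \<in> hom n m \<Longrightarrow> x \<in> C n \<Longrightarrow> act n m phi x \<in> C m"
  and act_add: "phi \<in> hom n m \<Longrightarrow> x \<in> C n \<Longrightarrow> y \<in> C n \<Longrightarrow>
    act n m phi (x + y) = act n m phi x + act n m phi y"
  and act_scale: "phi \<in> hom n m \<Longrightarrow> x \<in> C n \<Longrightarrow> act n m phi (sc c x) = sc c (act n m phi x)"
  and act_idm: "x \<in> C n \<Longrightarrow> act n n (idm n) x = x"
  and act_comp: "phi \<in> hom n m \<Longrightarrow> psi \<in> hom m l \<Longrightarrow> x \<in> C n \<Longrightarrow>
    act n l (comp n psi phi) x = act m l psi (act n m phi x)"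
  using fig_module unfolding fig_module_def is_sqm_def
  by (auto simp del: split_paired_All split_paired_Ex)

lemma act_linear_on: "phi \<in> hom n m \<Longrightarrow> linear_on sc sc (C n) (act n m phi)"
  by (intro linear_on.intro module_pair.intro linear_on_axioms.intro module subspace act_add act_scale)

lemma kGn_module: "kGn_module sc n (C n) (act n n)"
  unfolding kGn_module_def
  by (simp add: module subspace act_closed act_add act_scale act_idm act_comp)

lemma Pproj_eq_lin_ext: "Pproj sc act j = lin_ext sc (\<lambda>(n, v, phi). act n j phi v)"
  by (auto simp: fun_eq_iff Pproj_def lin_ext_def intro!: sum.cong split: prod.split)

lemma Pproj_linear_on: "linear_on fsc sc (RPcar I d W j) (Pproj sc act j)"
  unfolding Pproj_eq_lin_ext
  by (rule module.lin_ext_linear_on[OF module Mcar_subspace Mcar_finite_supp])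

lemma Pproj_delta: "Pproj sc act j (delta (n, v, phi)) = act n j phi v"
  by (simp add: Pproj_eq_lin_ext module.lin_ext_delta[OF module])

lemma Pproj_Mcar:
  assumes p: "p \<in> Mcar I C j"
  shows "Pproj sc act j p \<in> C j"
proof -
  have "Pproj sc act j b \<in> C j" if "b \<in> Mbasis I C j" for b
  proof -
    from that obtain i w phi where "b = delta (i, w, phi)" "w \<in> C i" "phi \<in> hom i j"
      unfolding Mbasis_def by blast
    then show ?thesis
      by (simp add: Pproj_delta act_closed)
  qed
  then have "module.span sc (Pproj sc act j ` Mbasis I C j) \<subseteq> C j"
    by (intro module.span_minimal[OF module _ subspace]) blast
  with p show ?thesis
    unfolding Mcar_eq_span[of I C j] linear_on.span_image[OF Pproj_linear_on Mbasis_subset] by blast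
qed

lemma Pproj_natural:
  assumes p: "p \<in> Mcar I C n" and phi: "phi \<in> hom n l"
  shows "Pproj sc act l (Mact n l phi p) = act n l phi (Pproj sc act n p)"
proof (rule Mcar_linear_eqI[OF _ _ _ p])
  show "linear_on fsc sc (Mcar I C n) (\<lambda>p. Pproj sc act l (Mact n l phi p))"
    by (rule linear_on_comp[OF Mact_linear_on Pproj_linear_on]) (use Mact_Mcar[OF _ phi] in blast)
  show "linear_on fsc sc (Mcar I C n) (\<lambda>p. act n l phi (Pproj sc act n p))"
    by (rule linear_on_comp[OF Pproj_linear_on act_linear_on[OF phi]]) (use Pproj_Mcar in blast)
  fix i and w :: 'v and chi :: "'g morph"
  assume "w \<in> C i" "chi \<in> hom i n"
  then show "Pproj sc act l (Mact n l phi (delta (i, w, chi))) =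
      act n l phi (Pproj sc act n (delta (i, w, chi)))"
    by (simp add: Mact_delta[OF phi] Pproj_delta act_comp[OF _ phi])
qed

definition kernel :: "nat set \<Rightarrow> nat \<Rightarrow> (nat \<times> 'v \<times> 'g morph \<Rightarrow> 'k) set"
  where "kernel I j = {p \<in> Mcar I C j. Pproj sc act j p = 0}"

lemma kernel_Mcar: "p \<in> kernel I j \<Longrightarrow> p \<in> Mcar I C j"
  by (simp add: kernel_def)

lemma Ksqm_eq: "Ksqm sc C act = (kernel UNIV, \<lambda>_. {0}, Mact)"
  by (simp add: Ksqm_def kernel_def Pcar_eq_Mcar fun_eq_iff)

lemma RPrel_subset_kernel: "RPrel sc I (\<lambda>n. n) C (\<lambda>i. act i i) j \<subseteq> kernel I j"
  unfolding RPrel_def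
proof (intro module.span_minimal[OF module_fsc] subsetI)
  interpret P: linear_on fsc sc "Mcar I C j" "Pproj sc act j"
    by (rule Pproj_linear_on)
  show "module.subspace fsc (kernel I j)"
    unfolding kernel_def by (rule P.subspace_kernel)
  fix g assume "g \<in> {delta (i, w + w', phi) - delta (i, w, phi) - delta (i, w', phi) | i w w' phi.
            i \<in> I \<and> w \<in> C i \<and> w' \<in> C i \<and> phi \<in> hom i j}
     \<union> {delta (i, sc c w, phi) - fsc c (delta (i, w, phi)) | i c w phi.
            i \<in> I \<and> w \<in> C i \<and> phi \<in> hom i j}
     \<union> {delta (i, act i i s w, phi) - delta (i, w, comp i phi s) | i s w phi.
            i \<in> I \<and> s \<in> hom i i \<and> w \<in> C i \<and> phi \<in> hom i j}"
  then show "g \<in> kernel I j"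
    unfolding kernel_def mem_Collect_eq
  proof (elim UnE CollectE exE conjE)
    fix i w w' phi
    assume "g = delta (i, w + w', phi) - delta (i, w, phi) - delta (i, w', phi)"
      and "i \<in> I" "w \<in> C i" "w' \<in> C i" "phi \<in> hom i j"
    moreover from this have "w + w' \<in> C i"
      using module.subspace_add[OF module subspace] by blast
    ultimately show "g \<in> Mcar I C j \<and> Pproj sc act j g = 0"
      by (simp add: delta_Mcar P.m1.subspace_diff[OF P.subspace] P.diff Pproj_delta act_add)
  next
    fix i c w phi
    assume "g = delta (i, sc c w, phi) - fsc c (delta (i, w, phi))"
      and "i \<in> I" "w \<in> C i" "phi \<in> hom i j"
    moreover from this have "sc c w \<in> C i"
      using module.subspace_scale[OF module subspace] by blast
    ultimately show "g \<in> Mcar I C j \<and> Pproj sc act j g = 0"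
      by (simp add: delta_Mcar P.m1.subspace_diff[OF P.subspace] P.m1.subspace_scale[OF P.subspace]
          P.diff P.scale Pproj_delta act_scale)
  next
    fix i s w phi
    assume "g = delta (i, act i i s w, phi) - delta (i, w, comp i phi s)"
      and "i \<in> I" "s \<in> hom i i" "w \<in> C i" "phi \<in> hom i j"
    then show "g \<in> Mcar I C j \<and> Pproj sc act j g = 0"
      by (simp add: delta_Mcar P.m1.subspace_diff[OF P.subspace] P.diff Pproj_delta act_closed
          act_comp hom_comp)
  qed
qed

text \<open>The step where the vanishing of H_1 enters; p lives in degree J + 1 = j0 + (m + 1).\<close>

lemma kernel_Suc_mem_span:
  assumes H: "H1D_vanishes sc C act (Suc m)" and J: "m \<le> J" and p: "p \<in> kernel {..m} (Suc J)"
  shows "p \<in> module.span fsc {Mact J (Suc J) psi q | psi q. psi \<in> hom J (Suc J) \<and> q \<in> kernel UNIV J}"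
proof -
  define j0 where "j0 = J - m"
  have j0: "j0 + Suc m = Suc J" "j0 + m = J"
    using J by (simp_all add: j0_def)
  let ?K = "Ksqm sc C act" and ?P = "Psqm C :: (_ \<Rightarrow> 'k, 'g) sqm"
  have pM: "p \<in> Mcar {..m} C (Suc J)"
    using p by (rule kernel_Mcar)
  have "p \<in> fst ((Dop ^^ Suc m) ?K) j0"
    unfolding Dop_pow_carrier Ksqm_eq fst_conv j0(1)
    using p Mcar_mono[of "{..m}" UNIV] by (auto simp: kernel_def)
  moreover have "p \<in> fst (snd ((Dop ^^ Suc m) ?P)) j0"
    unfolding Psqm_eq
  proof (rule free_mem_Dop_pow_rel)
    show "p \<in> Mcar UNIV C (j0 + Suc m)"
      using pM Mcar_mono[of "{..m}" UNIV] by (auto simp: j0)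
    fix n v phi assume "p (n, v, phi) \<noteq> 0"
    then have "n \<in> {..m}"
      using Mcar_supp[OF pM] by blast
    then have "n < card {j0..<j0 + Suc m}"
      by simp
    then show "\<exists>b\<in>{j0..<j0 + Suc m}. b \<notin> fst phi ` {..<n}"
      by (rule exists_not_in_image_lessThan)
  qed
  ultimately have "p \<in> fst (snd ((Dop ^^ Suc m) ?K)) j0"
    using H unfolding H1D_vanishes_def Let_def by blast
  then show ?thesis
    using Dop_pow_Suc_rel_free_subset_span[of m "kernel UNIV" j0] unfolding Ksqm_eq j0 by blast
qed

end

section \<open>Relations in degree at most m\<close>

locale fig_mod_generated = fig_mod sc C act
  for sc :: "'k::comm_ring_1 \<Rightarrow> 'v::ab_group_add \<Rightarrow> 'v"
    and C :: "nat \<Rightarrow> 'v set"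
    and act :: "nat \<Rightarrow> nat \<Rightarrow> ('g::group_add) morph \<Rightarrow> 'v \<Rightarrow> 'v" +
  fixes m :: nat
  assumes generated: "generated_in_degree sc C act m"
begin

lemma Pproj_surj:
  assumes v: "v \<in> C j"
  obtains p where "p \<in> Mcar {..m} C j" "Pproj sc act j p = v"
proof -
  let ?gens = "{act n j phi x | n x phi. n \<le> m \<and> x \<in> C n \<and> phi \<in> hom n j}"
  have gens: "?gens \<subseteq> Pproj sc act j ` Mbasis {..m} C j"
  proof
    fix y assume "y \<in> ?gens"
    then obtain n x phi where y: "y = act n j phi x" and "n \<le> m" "x \<in> C n" "phi \<in> hom n j"
      by blast
    then have "Pproj sc act j (delta (n, x, phi)) \<in> Pproj sc act j ` Mbasis {..m} C j"
      by (simp add: delta_Mbasis)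
    then show "y \<in> Pproj sc act j ` Mbasis {..m} C j"
      by (simp add: y Pproj_delta)
  qed
  have "C j \<subseteq> module.span sc ?gens"
    using generated unfolding generated_in_degree_def gen_sqm_def prod.case setplus_zero by (rule spec)
  also have "\<dots> \<subseteq> module.span sc (Pproj sc act j ` Mbasis {..m} C j)"
    using gens by (rule module.span_mono[OF module])
  also have "\<dots> = Pproj sc act j ` Mcar {..m} C j"
    by (subst Mcar_eq_span) (rule linear_on.span_image[OF Pproj_linear_on Mbasis_subset])
  finally have "v \<in> Pproj sc act j ` Mcar {..m} C j"
    using v by (rule subsetD)
  then obtain p where "p \<in> Mcar {..m} C j" "v = Pproj sc act j p"
    by blast
  with that show ?thesis
    by simp
qed

text \<open>
  A preimage of v in M, chosen canonically in degrees \<le> m so that the retraction below is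
  the identity on M. The SOME is only ever applied to v \<in> C n, where a preimage exists.
\<close>

definition lift where
  "lift n v = (if n \<le> m then delta (n, v, idm n)
    else (SOME p. p \<in> Mcar {..m} C n \<and> Pproj sc act n p = v))"

lemma lift_spec:
  assumes v: "v \<in> C n"
  shows "lift n v \<in> Mcar {..m} C n \<and> Pproj sc act n (lift n v) = v"
proof (cases "n \<le> m")
  case True
  with v show ?thesis
    by (simp add: lift_def delta_Mcar idm_hom Pproj_delta act_idm)
next
  case False
  obtain p where "p \<in> Mcar {..m} C n" "Pproj sc act n p = v"
    using Pproj_surj[OF v] .
  then have "\<exists>p. p \<in> Mcar {..m} C n \<and> Pproj sc act n p = v"
    by blast
  from someI_ex[OF this] False show ?thesis
    by (simp add: lift_def)
qed

lemmas lift_Mcar = conjunct1[OF lift_spec] and Pproj_lift = conjunct2[OF lift_spec]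

definition retract where
  "retract j = lin_ext fsc (\<lambda>(n, v, phi). Mact n j phi (lift n v))"

lemma retract_linear_on: "linear_on fsc fsc (Mcar I C j) (retract j)"
  unfolding retract_def by (rule module.lin_ext_linear_on[OF module_fsc Mcar_subspace Mcar_finite_supp])

lemma retract_delta: "retract j (delta (n, v, phi)) = Mact n j phi (lift n v)"
  by (simp add: retract_def module.lin_ext_delta[OF module_fsc])

lemma retract_Mcar:
  assumes p: "p \<in> Mcar UNIV C j"
  shows "retract j p \<in> Mcar {..m} C j"
proof -
  have "retract j b \<in> Mcar {..m} C j" if "b \<in> Mbasis UNIV C j" for b
  proof -
    from that obtain n v phi where "b = delta (n, v, phi)" "v \<in> C n" "phi \<in> hom n j"
      unfolding Mbasis_def by blast
    then show ?thesis
      by (simp add: retract_delta Mact_Mcar lift_Mcar)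
  qed
  then have "module.span fsc (retract j ` Mbasis UNIV C j) \<subseteq> Mcar {..m} C j"
    by (intro module.span_minimal[OF module_fsc _ Mcar_subspace]) blast
  with p show ?thesis
    unfolding Mcar_eq_span[of UNIV C j] linear_on.span_image[OF retract_linear_on Mbasis_subset] by blast
qed

lemma retract_id:
  assumes p: "p \<in> Mcar {..m} C j"
  shows "retract j p = p"
proof -
  have "retract j p = id p"
  proof (rule Mcar_linear_eqI[OF retract_linear_on
        module_hom.linear_on[OF module.module_hom_id[OF module_fsc] Mcar_subspace] _ p])
    fix n v and phi :: "'g morph"
    assume "n \<in> {..m}" "phi \<in> hom n j"
    then show "retract j (delta (n, v, phi)) = id (delta (n, v, phi))"
      by (simp add: retract_delta lift_def Mact_delta idm_hom comp_idm_right)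
  qed
  then show ?thesis
    by simp
qed

lemma Pproj_retract:
  assumes p: "p \<in> Mcar UNIV C j"
  shows "Pproj sc act j (retract j p) = Pproj sc act j p"
proof (rule Mcar_linear_eqI[OF linear_on_comp[OF retract_linear_on Pproj_linear_on] Pproj_linear_on _ p])
  show "retract j ` Mcar UNIV C j \<subseteq> Mcar {..m} C j"
    using retract_Mcar by blast
  fix n v and phi :: "'g morph"
  assume "v \<in> C n" "phi \<in> hom n j"
  then show "Pproj sc act j (retract j (delta (n, v, phi))) = Pproj sc act j (delta (n, v, phi))"
    by (simp add: retract_delta Pproj_natural[OF lift_Mcar] Pproj_lift Pproj_delta)
qed

lemma retract_natural:
  assumes p: "p \<in> Mcar UNIV C j" and psi: "psi \<in> hom j l"
  shows "retract l (Mact j l psi p) = Mact j l psi (retract j p)"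
proof (rule Mcar_linear_eqI[OF linear_on_comp[OF Mact_linear_on retract_linear_on]
      linear_on_comp[OF retract_linear_on Mact_linear_on] _ p])
  show "Mact j l psi ` Mcar UNIV C j \<subseteq> Mcar UNIV C l"
    using Mact_Mcar[OF _ psi] by blast
  show "retract j ` Mcar UNIV C j \<subseteq> Mcar {..m} C j"
    using retract_Mcar by blast
  fix n v and phi :: "'g morph"
  assume "v \<in> C n" "phi \<in> hom n j"
  then show "retract l (Mact j l psi (delta (n, v, phi))) = Mact j l psi (retract j (delta (n, v, phi)))"
    by (simp add: retract_delta Mact_delta psi hom_comp Mact_comp[OF lift_Mcar])
qed

lemma retract_kernel: "p \<in> kernel UNIV j \<Longrightarrow> retract j p \<in> kernel {..m} j"
  by (simp add: kernel_def retract_Mcar Pproj_retract)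

definition kernel_gens where
  "kernel_gens J = {Mact n J phi x | n x phi. n \<le> m \<and> x \<in> kernel {..m} n \<and> phi \<in> hom n J}"

lemma kernel_subset_kernel_gens:
  assumes J: "J \<le> m"
  shows "kernel {..m} J \<subseteq> kernel_gens J"
proof
  fix p assume p: "p \<in> kernel {..m} J"
  then have "p = Mact J J (idm J) p"
    by (rule Mact_idm[OF kernel_Mcar, symmetric])
  with J p idm_hom show "p \<in> kernel_gens J"
    unfolding kernel_gens_def by blast
qed

lemma Mact_span_kernel_gens:
  assumes psi: "psi \<in> hom J L" and x: "x \<in> module.span fsc (kernel_gens J)"
  shows "Mact J L psi x \<in> module.span fsc (kernel_gens L)"
proof -
  have "Mact J L psi ` kernel_gens J \<subseteq> kernel_gens L"
  proof
    fix y assume "y \<in> Mact J L psi ` kernel_gens J"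
    then obtain n q phi where y: "y = Mact J L psi (Mact n J phi q)"
      and n: "n \<le> m" and q: "q \<in> kernel {..m} n" and phi: "phi \<in> hom n J"
      unfolding kernel_gens_def by blast
    have "y = Mact n L (comp n psi phi) q"
      unfolding y by (rule Mact_comp[OF kernel_Mcar[OF q] phi psi])
    with n q hom_comp[OF phi psi] show "y \<in> kernel_gens L"
      unfolding kernel_gens_def by blast
  qed
  then have "module.span fsc (Mact J L psi ` kernel_gens J) \<subseteq> module.span fsc (kernel_gens L)"
    by (rule module.span_mono[OF module_fsc])
  with x show ?thesis
    unfolding module_hom.span_image[OF Mact_module_hom] by blast
qed

lemma kernel_Suc_subset_span:
  assumes H: "H1D_vanishes sc C act (Suc m)" and J: "m \<le> J"
  shows "kernel {..m} (Suc J) \<subseteq>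
    module.span fsc {Mact J (Suc J) psi q | psi q. psi \<in> hom J (Suc J) \<and> q \<in> kernel {..m} J}"
    (is "_ \<subseteq> module.span fsc ?Y")
proof
  fix p assume p: "p \<in> kernel {..m} (Suc J)"
  let ?X = "{Mact J (Suc J) psi q | psi q. psi \<in> hom J (Suc J) \<and> q \<in> kernel UNIV J}"
  have X: "?X \<subseteq> Mcar UNIV C (Suc J)"
    using Mact_Mcar by (auto simp: kernel_def)
  have "retract (Suc J) ` ?X \<subseteq> ?Y"
    using retract_natural retract_kernel by (fastforce simp: kernel_def)
  have "p = retract (Suc J) p"
    using retract_id[OF kernel_Mcar[OF p]] by simp
  also have "\<dots> \<in> retract (Suc J) ` module.span fsc ?X"
    using kernel_Suc_mem_span[OF H J p] by (rule imageI)
  also have "\<dots> = module.span fsc (retract (Suc J) ` ?X)"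
    by (rule linear_on.span_image[OF retract_linear_on X, symmetric])
  also have "\<dots> \<subseteq> module.span fsc ?Y"
    by (rule module.span_mono[OF module_fsc]) fact
  finally show "p \<in> module.span fsc ?Y" .
qed

lemma kernel_generated:
  assumes H: "H1D_vanishes sc C act (Suc m)"
  shows "kernel {..m} J \<subseteq> module.span fsc (kernel_gens J)"
proof (induction J)
  case 0
  then show ?case
    using kernel_subset_kernel_gens module.span_superset[OF module_fsc] by blast
next
  case (Suc J)
  show ?case
  proof (cases "Suc J \<le> m")
    case True
    then show ?thesis
      using kernel_subset_kernel_gens module.span_superset[OF module_fsc] by blast
  next
    case False
    have "{Mact J (Suc J) psi q | psi q. psi \<in> hom J (Suc J) \<and> q \<in> kernel {..m} J}
        \<subseteq> module.span fsc (kernel_gens (Suc J))"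
      using Mact_span_kernel_gens Suc.IH by blast
    then have "module.span fsc {Mact J (Suc J) psi q | psi q. psi \<in> hom J (Suc J) \<and> q \<in> kernel {..m} J}
        \<subseteq> module.span fsc (kernel_gens (Suc J))"
      by (rule module.span_minimal[OF module_fsc _ module.subspace_span[OF module_fsc]])
    with kernel_Suc_subset_span[OF H] False show ?thesis
      by (meson not_less_eq_eq order_trans)
  qed
qed

theorem related_in_degree:
  assumes H: "H1D_vanishes sc C act (Suc m)"
  shows "related_in_degree sc C act m"
  unfolding related_in_degree_def
proof (intro exI[of _ "{..m}"] exI[of _ "\<lambda>n. n"] exI[of _ C] exI[of _ "\<lambda>i. act i i"]
    exI[of _ "Pproj sc act"] conjI allI ballI impI)
  show "kGn_module sc i (C i) (act i i)" for i
    by (rule kGn_module)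
  show "Pproj sc act j p \<in> C j" if "p \<in> Mcar {..m} C j" for j p
    using that by (rule Pproj_Mcar)
  show "Pproj sc act j (p + q) = Pproj sc act j p + Pproj sc act j q"
    if "p \<in> Mcar {..m} C j" "q \<in> Mcar {..m} C j" for j p q
    using that by (rule linear_on.add[OF Pproj_linear_on])
  show "Pproj sc act j (fsc c p) = sc c (Pproj sc act j p)" if "p \<in> Mcar {..m} C j" for j c p
    using that by (rule linear_on.scale[OF Pproj_linear_on])
  show "Pproj sc act j p = 0" if "p \<in> RPrel sc {..m} (\<lambda>n. n) C (\<lambda>i. act i i) j" for j p
    using RPrel_subset_kernel that by (auto simp: kernel_def)
  show "Pproj sc act l (Mact n l phi p) = act n l phi (Pproj sc act n p)"
    if "phi \<in> hom n l" "p \<in> Mcar {..m} C n" for n l phi p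
    using that(2,1) by (rule Pproj_natural)
  show "Pproj sc act j ` Mcar {..m} C j = C j" for j
    using Pproj_Mcar Pproj_surj by (metis image_subsetI subsetI subset_antisym image_eqI)
  show "gen_sqm fsc (\<lambda>j. {p \<in> Mcar {..m} C j. Pproj sc act j p = 0},
      RPrel sc {..m} (\<lambda>n. n) C (\<lambda>i. act i i), Mact) m"
    unfolding gen_sqm_def prod.case
  proof
    fix j
    have "0 \<in> RPrel sc {..m} (\<lambda>n. n) C (\<lambda>i. act i i) j"
      unfolding RPrel_def by (rule module.span_zero[OF module_fsc])
    then have "kernel {..m} j \<subseteq>
        setplus (module.span fsc (kernel_gens j)) (RPrel sc {..m} (\<lambda>n. n) C (\<lambda>i. act i i) j)"
      by (rule order_trans[OF kernel_generated[OF H] subset_setplus])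
    then show "{p \<in> Mcar {..m} C j. Pproj sc act j p = 0} \<subseteq> setplus (module.span fsc
        {Mact n j phi x | n x phi.
          n \<le> m \<and> x \<in> {p \<in> Mcar {..m} C n. Pproj sc act n p = 0} \<and> phi \<in> hom n j})
        (RPrel sc {..m} (\<lambda>n. n) C (\<lambda>i. act i i) j)"
      unfolding kernel_def kernel_gens_def .
  qed
qed

end

lemma H1D_vanishes_if_depth_infinite:
  assumes "depth sc C act = \<infinity>"
  shows "H1D_vanishes sc C act (Suc a)"
proof (rule ccontr)
  assume "\<not> H1D_vanishes sc C act (Suc a)"
  then have "depth sc C act \<le> enat a"
    unfolding depth_def by (intro Inf_lower) blast
  with assms show False
    by simp
qed

theorem mainTheorem14:
  fixes sc :: "'k::comm_ring_1 \<Rightarrow> 'v::ab_group_add \<Rightarrow> 'v"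
    and C :: "nat \<Rightarrow> 'v set"
    and act :: "nat \<Rightarrow> nat \<Rightarrow> ('g::group_add) morph \<Rightarrow> 'v \<Rightarrow> 'v"
  assumes V: "fig_module sc C act"
  shows "(\<forall>m. generated_in_degree sc C act m \<and> H1D_vanishes sc C act (Suc m)
              \<longrightarrow> related_in_degree sc C act m)
       \<and> ((\<exists>m. generated_in_degree sc C act m) \<and> depth sc C act = \<infinity>
              \<longrightarrow> presented_in_finite_degree sc C act)"
proof -
  have related: "related_in_degree sc C act m"
    if "generated_in_degree sc C act m" "H1D_vanishes sc C act (Suc m)" for m
    using that V by (intro fig_mod_generated.related_in_degree fig_mod_generated.intro
        fig_mod.intro fig_mod_generated_axioms.intro)
  moreover have "presented_in_finite_degree sc C act"
    if "generated_in_degree sc C act m" "depth sc C act = \<infinity>" for m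
    using that related H1D_vanishes_if_depth_infinite
    unfolding presented_in_finite_degree_def by blast
  ultimately show ?thesis
    by blast
qed

end
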